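(* Let $G$ be the two-player game with $A_i=\{a_{i1},a_{i2},a_{i3}\}$ and fitness vectors (row $a_{1r}$, column $a_{2c}$): row 1: $(4,4),(2,2),(0,5)$; row 2: $(2,2),(4,4),(0,0)$; row 3: $(5,0),(0,0),(2,2)$. Let $\mu=\delta_{\theta_1}\times\delta_{\theta_2}$ where $\theta_1=\theta_2=\theta\in\mathbb{R}^A$ with $\theta(a_{11},a_{21})=\theta(a_{12},a_{22})=2$, $\theta(a_{11},a_{22})=\theta(a_{12},a_{21})=1$, and $\theta(a)=0$ for all other $a\in A$. Let $s_1(\theta_1)=s_2(\theta_2)=(1/2,1/2,0)$. Then $s$ is a Bayesian–Nash equilibrium of the no-observability game with distribution $\mu$, and the configuration $(\mu,s)$ is stable under no observability.
   Context: Preference types: $\Theta=\mathbb{R}^A$, $A=A_1\times A_2$ (utility functions on $A$, extended bilinearly to mixed profiles); $\pi_i$ likewise extended. $\mathcal{M}(\Theta^2)$: product distributions $\mu=\mu_1\times\mu_2$ with finitely supported marginals; $\mu_{-i}=\mu_j$ ($j\neq i$). Mutants: for nonempty $J\subseteq\{1,2\}$, a mutant sub-profile is $\tilde\theta_J\in\prod_{j\in J}(\Theta\setminus\operatorname{supp}\mu_j)$ with shares $\varepsilon\in(0,1)^{|J|}$, $\|\varepsilon\|=\max_j\varepsilon_j$; post-entry $\tilde\mu^\varepsilon_i=(1-\varepsilon_i)\mu_i+\varepsilon_i\delta_{\tilde\theta_i}$ for $i\in J$, $\tilde\mu^\varepsilon_i=\mu_i$ otherwise. No observability: a strategy of player $i$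 is $s_i:\operatorname{supp}\mu_i\to\Delta(A_i)$; $s$ is a Bayesian–Nash equilibrium if for each $i$ and $\theta_i\in\operatorname{supp}\mu_i$, $s_i(\theta_i)\in\arg\max_{\sigma_i\in\Delta(A_i)}\sum_{\theta'_{-i}}\mu_{-i}(\theta'_{-i})\theta_i(\sigma_i,s_{-i}(\theta'_{-i}))$; $B_0(\mu)$ is the set of these; $(\mu,s)$ is a configuration, with aggregate outcome $x(\mu,s)=\big(\sum_{\theta_i}\mu_i(\theta_i)s_i(\theta_i)\big)_{i}$. Average fitness: $\Pi_{\theta_i}(\mu;s)=\pi_i(s_i(\theta_i),x(\mu,s)_{-i})$. Balanced: all types in each $\operatorname{supp}\mu_i$ have equal average fitness. Nearby set: for $\eta\ge0$, $B_0^\eta(\tilde\mu^\varepsilon;s)=\{\tilde s\in B_0(\tilde\mu^\varepsilon):\max_{i}\|\tilde s_i(\theta_i)-s_i(\theta_i)\|\le\eta\ \forall\theta\in\operatorname{supp}\mu\}$ (Euclidean norm). $(\mu,s)$ is stable if it is balanced and for every nonempty $J$, every $\tilde\theta_J$ and every $\eta>0$ there exist $\bar\eta\in[0,\eta)$ and $\bar\epsilon\in(0,1)$ such that for every $\varepsilon$ with $\|\varepsilon\|\in(0,\bar\epsilon)$, $B_0^{\bar\eta}(\tilde\mu^\varepsilon;s)\neq\emptyset$ and every $\tilde s\in B_0^{\bar\eta}(\tilde\mu^\varepsilon;s)$ satisfies either (i) some $j\in J$ has $\Pi_{\theta_j}(\tilde\mu^\varepsilon;\tilde s)>\Pi_{\tilde\theta_j}(\tilde\mu^\varepsilon;\tilde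 s)$ for all $\theta_j\in\operatorname{supp}\mu_j$, or (ii) for every $i$ all types in $\operatorname{supp}\tilde\mu^\varepsilon_i$ have equal average fitness under $(\tilde\mu^\varepsilon,\tilde s)$. *)

theory Defs
  imports Complex_Main
begin

datatype act = A1 | A2 | A3

lemma UNIV_act: "(UNIV :: act set) = {A1, A2, A3}"
  using act.exhaust by auto

instance act :: finite
  by standard (simp add: UNIV_act)

datatype pl = P1 | P2

lemma UNIV_pl: "(UNIV :: pl set) = {P1, P2}"
  using pl.exhaust by auto

instance pl :: finite
  by standard (simp add: UNIV_pl)

fun other :: "pl \<Rightarrow> pl" where
  "other P1 = P2"
| "other P2 = P1"

type_synonym mixed = "act \<Rightarrow> real"
(* a preference type theta in R^A, A = A_1 x A_2; argument is the profile (a_1, a_2) *)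
type_synonym ptype = "act \<times> act \<Rightarrow> real"
(* mu i = marginal distribution of player i's types (finitely supported weights) *)
type_synonym distr = "pl \<Rightarrow> ptype \<Rightarrow> real"
(* s i theta = mixed action of player i's type theta (only values on the support matter) *)
type_synonym strat = "pl \<Rightarrow> ptype \<Rightarrow> mixed"

definition simplex :: "mixed set" where
  "simplex = {\<sigma>. (\<forall>a. 0 \<le> \<sigma> a) \<and> (\<Sum>a\<in>UNIV. \<sigma> a) = 1}"

definition ext :: "(act \<times> act \<Rightarrow> real) \<Rightarrow> mixed \<Rightarrow> mixed \<Rightarrow> real" where
  "ext u \<sigma>1 \<sigma>2 = (\<Sum>a\<in>UNIV. \<Sum>b\<in>UNIV. \<sigma>1 a * \<sigma>2 b * u (a, b))"

(* u(sigma_i, sigma_{-i}) evaluated at the profile where player i plays own, the other opp *)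
definition evalp :: "(act \<times> act \<Rightarrow> real) \<Rightarrow> pl \<Rightarrow> mixed \<Rightarrow> mixed \<Rightarrow> real" where
  "evalp u i own opp = (if i = P1 then ext u own opp else ext u opp own)"

definition supp :: "('a \<Rightarrow> real) \<Rightarrow> 'a set" where
  "supp d = {x. d x \<noteq> 0}"

definition is_BNE :: "distr \<Rightarrow> strat \<Rightarrow> bool" where
  "is_BNE \<mu> s \<longleftrightarrow>
     (\<forall>i. \<forall>\<theta>\<in>supp (\<mu> i). s i \<theta> \<in> simplex \<and>
        (\<forall>\<sigma>\<in>simplex.
           (\<Sum>\<theta>'\<in>supp (\<mu> (other i)). \<mu> (other i) \<theta>' * evalp \<theta> i \<sigma> (s (other i) \<theta>'))
           \<le> (\<Sum>\<theta>'\<in>supp (\<mu> (other i)). \<mu> (other i) \<theta>' * evalp \<theta> i (s i \<theta>) (s (other i) \<theta>'))))"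

definition agg :: "distr \<Rightarrow> strat \<Rightarrow> pl \<Rightarrow> mixed" where
  "agg \<mu> s i = (\<lambda>a. \<Sum>\<theta>\<in>supp (\<mu> i). \<mu> i \<theta> * s i \<theta> a)"

definition avg_fit :: "(pl \<Rightarrow> act \<times> act \<Rightarrow> real) \<Rightarrow> distr \<Rightarrow> strat \<Rightarrow> pl \<Rightarrow> ptype \<Rightarrow> real" where
  "avg_fit \<pi> \<mu> s i \<theta> = evalp (\<pi> i) i (s i \<theta>) (agg \<mu> s (other i))"

definition balanced :: "(pl \<Rightarrow> act \<times> act \<Rightarrow> real) \<Rightarrow> distr \<Rightarrow> strat \<Rightarrow> bool" where
  "balanced \<pi> \<mu> s \<longleftrightarrow>
     (\<forall>i. \<forall>\<theta>\<in>supp (\<mu> i). \<forall>\<theta>'\<in>supp (\<mu> i). avg_fit \<pi> \<mu> s i \<theta> = avg_fit \<pi> \<mu> s i \<theta>')"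

(* post-entry distribution; only the values of mt and eps on J matter *)
definition postentry :: "distr \<Rightarrow> pl set \<Rightarrow> (pl \<Rightarrow> ptype) \<Rightarrow> (pl \<Rightarrow> real) \<Rightarrow> distr" where
  "postentry \<mu> J mt \<epsilon> = (\<lambda>i. if i \<in> J
       then (\<lambda>t. (1 - \<epsilon> i) * \<mu> i t + \<epsilon> i * (if t = mt i then 1 else 0))
       else \<mu> i)"

definition vnorm :: "mixed \<Rightarrow> real" where
  "vnorm v = sqrt (\<Sum>a\<in>UNIV. (v a)\<^sup>2)"

definition nearby :: "distr \<Rightarrow> distr \<Rightarrow> strat \<Rightarrow> real \<Rightarrow> strat \<Rightarrow> bool" where
  "nearby \<mu>' \<mu> s \<eta> s' \<longleftrightarrow> is_BNE \<mu>' s' \<and>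
     (\<forall>i. \<forall>\<theta>\<in>supp (\<mu> i). vnorm (\<lambda>a. s' i \<theta> a - s i \<theta> a) \<le> \<eta>)"

definition stable :: "(pl \<Rightarrow> act \<times> act \<Rightarrow> real) \<Rightarrow> distr \<Rightarrow> strat \<Rightarrow> bool" where
  "stable \<pi> \<mu> s \<longleftrightarrow> balanced \<pi> \<mu> s \<and>
    (\<forall>J mt \<eta>. J \<noteq> {} \<and> (\<forall>j\<in>J. mt j \<notin> supp (\<mu> j)) \<and> 0 < \<eta> \<longrightarrow>
      (\<exists>\<eta>b \<epsilon>b. 0 \<le> \<eta>b \<and> \<eta>b < \<eta> \<and> 0 < \<epsilon>b \<and> \<epsilon>b < 1 \<and>
        (\<forall>\<epsilon>. (\<forall>j\<in>J. 0 < \<epsilon> j \<and> \<epsilon> j < 1) \<and> Max (\<epsilon> ` J) < \<epsilon>b \<longrightarrow>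
          (\<exists>s'. nearby (postentry \<mu> J mt \<epsilon>) \<mu> s \<eta>b s') \<and>
          (\<forall>s'. nearby (postentry \<mu> J mt \<epsilon>) \<mu> s \<eta>b s' \<longrightarrow>
             (\<exists>j\<in>J. \<forall>\<theta>\<in>supp (\<mu> j).
                 avg_fit \<pi> (postentry \<mu> J mt \<epsilon>) s' j \<theta>
                 > avg_fit \<pi> (postentry \<mu> J mt \<epsilon>) s' j (mt j))
             \<or> balanced \<pi> (postentry \<mu> J mt \<epsilon>) s'))))"

(* fitness vectors: row = player 1's action, column = player 2's action *)
fun fitvec :: "act \<Rightarrow> act \<Rightarrow> real \<times> real" where
  "fitvec A1 A1 = (4, 4)" | "fitvec A1 A2 = (2, 2)" | "fitvec A1 A3 = (0, 5)"
| "fitvec A2 A1 = (2, 2)" | "fitvec A2 A2 = (4, 4)" | "fitvec A2 A3 = (0, 0)"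
| "fitvec A3 A1 = (5, 0)" | "fitvec A3 A2 = (0, 0)" | "fitvec A3 A3 = (2, 2)"

definition piG :: "pl \<Rightarrow> act \<times> act \<Rightarrow> real" where
  "piG i = (\<lambda>(r, c). if i = P1 then fst (fitvec r c) else snd (fitvec r c))"

definition theta0 :: ptype where
  "theta0 = (\<lambda>(a, b). if (a, b) = (A1, A1) \<or> (a, b) = (A2, A2) then 2
                      else if (a, b) = (A1, A2) \<or> (a, b) = (A2, A1) then 1 else 0)"

definition mu0 :: distr where
  "mu0 = (\<lambda>i t. if t = theta0 then 1 else 0)"

definition s0 :: strat where
  "s0 = (\<lambda>i t a. if a = A3 then 0 else 1/2)"

end

theory Submission
  imports Defs
begin

text \<open>Against an aggregate of the form \<open>(p, p, 1 - 2p)\<close> the resident type is indifferent between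
  \<open>a\<^sub>1\<close> and \<open>a\<^sub>2\<close>. Residents can therefore absorb entry: they shift weight between
  \<open>a\<^sub>1\<close> and \<open>a\<^sub>2\<close> to cancel a mutant's play of these actions, while a mutant playing
  \<open>a\<^sub>3\<close> only moves the aggregate within this family; a mutant that strictly prefers \<open>a\<^sub>3\<close>
  keeps preferring it after such a small move. This gives a nearby equilibrium. Conversely, in every
  nearby equilibrium the residents keep both \<open>a\<^sub>1\<close> and \<open>a\<^sub>2\<close> in their support, which
  forces both aggregates into this family and the residents to avoid \<open>a\<^sub>3\<close>. Fitness is then
  \<open>6p - \<sigma>(a\<^sub>3) (5p - 2)\<close> with \<open>p\<close> close to \<open>1/2\<close>: either some mutant plays
  \<open>a\<^sub>3\<close> and is strictly outperformed, or nobody does and all fitnesses coincide.\<close>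

lemma sum_UNIV_act: "(\<Sum>a\<in>UNIV. f a) = f A1 + f A2 + f A3"
  by (simp add: UNIV_act add.assoc)

lemma simplex_iff:
  "\<sigma> \<in> simplex \<longleftrightarrow> 0 \<le> \<sigma> A1 \<and> 0 \<le> \<sigma> A2 \<and> 0 \<le> \<sigma> A3 \<and> \<sigma> A1 + \<sigma> A2 + \<sigma> A3 = 1"
proof -
  have "(\<forall>a. 0 \<le> \<sigma> a) \<longleftrightarrow> (\<forall>a\<in>{A1, A2, A3}. 0 \<le> \<sigma> a)"
    by (simp flip: UNIV_act)
  then show ?thesis
    unfolding simplex_def sum_UNIV_act by simp
qed

definition pure :: "act \<Rightarrow> mixed" where
  "pure a = (\<lambda>b. if b = a then 1 else 0)"

lemma pure_in_simplex: "pure a \<in> simplex"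
  by (cases a) (simp_all add: simplex_iff pure_def)

lemma convex_comb_in_simplex:
  assumes "\<sigma> \<in> simplex" and "\<tau> \<in> simplex" and "0 \<le> e" and "e \<le> 1"
  shows "(\<lambda>a. (1 - e) * \<sigma> a + e * \<tau> a) \<in> simplex"
  using assms by (simp add: simplex_def sum.distrib flip: sum_distrib_left)

lemma evalp_eq_sum_pure: "evalp u i \<sigma> X = (\<Sum>a\<in>UNIV. \<sigma> a * evalp u i (pure a) X)"
  by (cases i) (simp_all add: evalp_def ext_def sum_UNIV_act pure_def algebra_simps)

lemma sum_evalp_opponent:
  assumes "finite S"
  shows "(\<Sum>\<theta>\<in>S. w \<theta> * evalp u i \<sigma> (f \<theta>)) = evalp u i \<sigma> (\<lambda>a. \<Sum>\<theta>\<in>S. w \<theta> * f \<theta> a)"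
  by (cases i) (simp_all add: evalp_def ext_def sum_UNIV_act distrib_left sum.distrib sum_distrib_left
      sum_distrib_right mult.assoc mult.left_commute)

definition best_reply :: "ptype \<Rightarrow> pl \<Rightarrow> mixed \<Rightarrow> mixed \<Rightarrow> bool" where
  "best_reply u i \<sigma> X \<longleftrightarrow> \<sigma> \<in> simplex \<and> (\<forall>\<tau>\<in>simplex. evalp u i \<tau> X \<le> evalp u i \<sigma> X)"

definition pure_best_reply :: "ptype \<Rightarrow> pl \<Rightarrow> act \<Rightarrow> mixed \<Rightarrow> bool" where
  "pure_best_reply u i a X \<longleftrightarrow> (\<forall>b. evalp u i (pure b) X \<le> evalp u i (pure a) X)"

lemma is_BNE_iff_best_reply:
  assumes "\<And>i. finite (supp (\<mu> i))"
  shows "is_BNE \<mu> s \<longleftrightarrow> (\<forall>i. \<forall>\<theta>\<in>supp (\<mu> i). best_reply \<theta> i (s i \<theta>) (agg \<mu> s (other i)))"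
  unfolding is_BNE_def best_reply_def agg_def by (simp add: sum_evalp_opponent assms)

lemma best_reply_pure:
  assumes "pure_best_reply u i a X"
  shows "best_reply u i (pure a) X"
  unfolding best_reply_def
proof (intro conjI ballI pure_in_simplex)
  fix \<tau> assume "\<tau> \<in> simplex"
  then have "(\<Sum>b\<in>UNIV. \<tau> b * evalp u i (pure b) X) \<le> (\<Sum>b\<in>UNIV. \<tau> b * evalp u i (pure a) X)"
    using assms by (intro sum_mono mult_left_mono) (auto simp: pure_best_reply_def simplex_def)
  also have "\<dots> = evalp u i (pure a) X"
    using \<open>\<tau> \<in> simplex\<close> by (simp add: simplex_def flip: sum_distrib_right)
  finally show "evalp u i \<tau> X \<le> evalp u i (pure a) X"
    by (subst evalp_eq_sum_pure)
qed

lemma exists_pure_best_reply: "\<exists>a. pure_best_reply u i a X"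
proof -
  let ?v = "\<lambda>b. evalp u i (pure b) X"
  have fin: "finite (range ?v)"
    by simp
  have "Max (range ?v) \<in> range ?v"
    by (rule Max_in[OF fin]) simp
  then obtain a where a: "Max (range ?v) = ?v a"
    by (rule rangeE)
  have "?v b \<le> ?v a" for b
    unfolding a[symmetric] by (rule Max_ge[OF fin]) simp
  then show ?thesis
    unfolding pure_best_reply_def by blast
qed

lemma best_reply_support:
  assumes "best_reply u i \<sigma> X" and "0 < \<sigma> a"
  shows "pure_best_reply u i a X"
proof -
  let ?v = "\<lambda>b. evalp u i (pure b) X"
  obtain m where m: "pure_best_reply u i m X"
    using exists_pure_best_reply by blast
  have "?v m \<le> evalp u i \<sigma> X"
    using assms(1) pure_in_simplex by (auto simp: best_reply_def)
  then have "(\<Sum>b\<in>UNIV. \<sigma> b * ?v m) \<le> (\<Sum>b\<in>UNIV. \<sigma> b * ?v b)"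
    using assms(1) by (simp add: best_reply_def simplex_def flip: sum_distrib_right evalp_eq_sum_pure)
  then have "(\<Sum>b\<in>UNIV. \<sigma> b * (?v m - ?v b)) = 0"
    using assms(1) m
    by (intro antisym sum_nonneg mult_nonneg_nonneg)
       (auto simp: best_reply_def simplex_def pure_best_reply_def right_diff_distrib sum_subtractf)
  moreover have "\<forall>b\<in>UNIV. 0 \<le> \<sigma> b * (?v m - ?v b)"
    using assms(1) m by (auto simp: best_reply_def simplex_def pure_best_reply_def)
  ultimately have "\<sigma> a * (?v m - ?v a) = 0"
    by (simp add: sum_nonneg_eq_0_iff)
  then show ?thesis
    using assms(2) m by (simp add: pure_best_reply_def)
qed

lemma abs_le_vnorm: "\<bar>v a\<bar> \<le> vnorm v"
  unfolding vnorm_def by (rule real_le_rsqrt) (simp, intro member_le_sum, auto)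

lemma vnorm_le:
  assumes "0 \<le> y" and "(\<Sum>a\<in>UNIV. (v a)\<^sup>2) \<le> y\<^sup>2"
  shows "vnorm v \<le> y"
  unfolding vnorm_def using assms by (rule real_le_lsqrt)

text \<open>The aggregate play of a population in which a share \<open>e\<close> plays \<open>a\<^sub>3\<close> and the rest
  follows \<open>s0\<close>.\<close>
definition mixA3 :: "real \<Rightarrow> mixed" where
  "mixA3 e = (\<lambda>a. if a = A3 then e else (1 - e) / 2)"

lemma s0_eq_mixA3: "s0 i t = mixA3 0"
  by (simp add: s0_def mixA3_def fun_eq_iff)

lemma mixA3_in_simplex: "0 \<le> e \<Longrightarrow> e \<le> 1 \<Longrightarrow> mixA3 e \<in> simplex"
  by (simp add: simplex_iff mixA3_def)

lemma mixA3_A1_A2: "mixA3 e A1 + mixA3 e A2 = 1 - e"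
  by (simp add: mixA3_def)

lemma evalp_mixA3:
  "evalp u i \<sigma> (mixA3 e) =
     (1 - e) * ((evalp u i \<sigma> (pure A1) + evalp u i \<sigma> (pure A2)) / 2) + e * evalp u i \<sigma> (pure A3)"
  by (cases i) (simp_all add: evalp_def ext_def sum_UNIV_act mixA3_def pure_def field_simps)

lemma evalp_theta0: "evalp theta0 i \<sigma> X = \<sigma> A1 * (2 * X A1 + X A2) + \<sigma> A2 * (X A1 + 2 * X A2)"
  by (cases i) (simp_all add: evalp_def ext_def sum_UNIV_act theta0_def algebra_simps)

lemma evalp_piG:
  "evalp (piG i) i \<sigma> X =
     \<sigma> A1 * (4 * X A1 + 2 * X A2) + \<sigma> A2 * (2 * X A1 + 4 * X A2) + \<sigma> A3 * (5 * X A1 + 2 * X A3)"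
  by (cases i) (simp_all add: evalp_def ext_def sum_UNIV_act piG_def algebra_simps)

lemma theta0_best_reply_mixA3:
  assumes "\<sigma> \<in> simplex" and "\<sigma> A1 + \<sigma> A2 = 1" and "0 \<le> e" and "e \<le> 1"
  shows "best_reply theta0 i \<sigma> (mixA3 e)"
proof -
  have payoff: "evalp theta0 i \<tau> (mixA3 e) = (\<tau> A1 + \<tau> A2) * (3 * (1 - e) / 2)" for \<tau>
    by (simp add: evalp_theta0 mixA3_def field_simps)
  have "(\<tau> A1 + \<tau> A2) * (3 * (1 - e) / 2) \<le> 1 * (3 * (1 - e) / 2)" if "\<tau> \<in> simplex" for \<tau>
    using that assms(4) by (intro mult_right_mono) (auto simp: simplex_iff)
  then show ?thesis
    using assms(1,2) by (simp add: best_reply_def payoff)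
qed

definition prefers_A3 :: "ptype \<Rightarrow> pl \<Rightarrow> bool" where
  "prefers_A3 t i \<longleftrightarrow>
     (\<forall>a. a \<noteq> A3 \<longrightarrow> evalp t i (pure a) (mixA3 0) < evalp t i (pure A3) (mixA3 0))"

lemma prefers_A3_eventually:
  assumes "prefers_A3 t i"
  shows "\<forall>\<^sub>F e in nhds 0. pure_best_reply t i A3 (mixA3 e)"
proof -
  let ?gap = "\<lambda>a e. evalp t i (pure A3) (mixA3 e) - evalp t i (pure a) (mixA3 e)"
  have "\<forall>\<^sub>F e in nhds 0. 0 < ?gap a e" if "a \<noteq> A3" for a
  proof (rule order_tendstoD(1))
    show "(?gap a \<longlongrightarrow> ?gap a 0) (nhds 0)"
      unfolding evalp_mixA3 by (intro tendsto_intros filterlim_ident)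
    show "0 < ?gap a 0"
      using assms that by (simp add: prefers_A3_def)
  qed
  then have "\<forall>\<^sub>F e in nhds 0. \<forall>a\<in>-{A3}. 0 < ?gap a e"
    by (simp add: eventually_ball_finite)
  then show ?thesis
    unfolding pure_best_reply_def
    by (rule eventually_mono) (metis ComplI diff_gt_0_iff_gt less_imp_le order_refl singletonD)
qed

lemma prefers_A3_robust:
  "\<exists>\<delta>>0. \<forall>i e. prefers_A3 (mt i) i \<longrightarrow> 0 \<le> e \<longrightarrow> e < \<delta> \<longrightarrow> pure_best_reply (mt i) i A3 (mixA3 e)"
proof -
  have "\<forall>\<^sub>F e in nhds 0. \<forall>i. prefers_A3 (mt i) i \<longrightarrow> pure_best_reply (mt i) i A3 (mixA3 e)"
    by (intro eventually_all_finite allI) (auto intro: prefers_A3_eventually)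
  then show ?thesis
    by (auto simp: eventually_nhds_metric dist_real_def)
qed

lemma exists_pure_best_reply_not_A3:
  assumes "\<not> prefers_A3 t i"
  shows "\<exists>a. a \<noteq> A3 \<and> pure_best_reply t i a (mixA3 0)"
proof -
  obtain b where b: "pure_best_reply t i b (mixA3 0)"
    using exists_pure_best_reply by blast
  obtain a where a: "a \<noteq> A3" "evalp t i (pure A3) (mixA3 0) \<le> evalp t i (pure a) (mixA3 0)"
    using assms by (auto simp: prefers_A3_def not_less)
  show ?thesis
  proof (cases "b = A3")
    case True
    then have "pure_best_reply t i a (mixA3 0)"
      using a(2) b by (auto simp: pure_best_reply_def intro: order_trans)
    then show ?thesis using a(1) by blast
  next
    case False
    then show ?thesis using b by blast
  qed
qed

definition valid_entry :: "pl set \<Rightarrow> (pl \<Rightarrow> ptype) \<Rightarrow> (pl \<Rightarrow> real) \<Rightarrow> bool" where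
  "valid_entry J mt \<epsilon> \<longleftrightarrow> (\<forall>j\<in>J. mt j \<noteq> theta0 \<and> 0 < \<epsilon> j \<and> \<epsilon> j < 1)"

lemma supp_mu0: "supp (mu0 i) = {theta0}"
  by (auto simp: supp_def mu0_def)

lemma supp_postentry:
  assumes "valid_entry J mt \<epsilon>"
  shows "supp (postentry mu0 J mt \<epsilon> i) = (if i \<in> J then {theta0, mt i} else {theta0})"
  using assms by (auto simp: postentry_def valid_entry_def supp_def mu0_def)

lemma agg_postentry:
  assumes "valid_entry J mt \<epsilon>"
  shows "agg (postentry mu0 J mt \<epsilon>) s i =
    (if i \<in> J then (\<lambda>a. (1 - \<epsilon> i) * s i theta0 a + \<epsilon> i * s i (mt i) a) else s i theta0)"
  using assms unfolding agg_def supp_postentry[OF assms]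
  by (auto simp: postentry_def valid_entry_def mu0_def)

lemma is_BNE_postentry_iff:
  assumes "valid_entry J mt \<epsilon>"
  shows "is_BNE (postentry mu0 J mt \<epsilon>) s \<longleftrightarrow>
    (\<forall>i. best_reply theta0 i (s i theta0) (agg (postentry mu0 J mt \<epsilon>) s (other i)) \<and>
         (i \<in> J \<longrightarrow> best_reply (mt i) i (s i (mt i)) (agg (postentry mu0 J mt \<epsilon>) s (other i))))"
  by (subst is_BNE_iff_best_reply) (auto simp: supp_postentry[OF assms])

text \<open>Residents offset the mutants' play, so that the aggregate keeps the form \<open>mixA3\<close>.\<close>
definition compensating_reply :: "real \<Rightarrow> act \<Rightarrow> mixed" where
  "compensating_reply e c = (\<lambda>b. (mixA3 (if c = A3 then e else 0) b - e * pure c b) / (1 - e))"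

lemma compensating_reply_agg:
  "e < 1 \<Longrightarrow> (1 - e) * compensating_reply e c b + e * pure c b = mixA3 (if c = A3 then e else 0) b"
  by (simp add: compensating_reply_def)

lemma compensating_reply_eq:
  assumes "e < 1"
  shows "compensating_reply e c b =
    (if c = A3 \<or> b = A3 then mixA3 0 b else if b = c then (1 - 2 * e) / (2 * (1 - e)) else 1 / (2 * (1 - e)))"
proof -
  have "1 - e \<noteq> 0"
    using assms by simp
  then show ?thesis
    by (cases c; cases b) (simp_all add: compensating_reply_def mixA3_def pure_def divide_simps)
qed

lemma compensating_reply_A1_A2:
  "e < 1 \<Longrightarrow> compensating_reply e c A1 + compensating_reply e c A2 = 1"
  by (cases c) (simp_all add: compensating_reply_eq mixA3_def divide_simps)

lemma compensating_reply_in_simplex: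
  assumes "0 \<le> e" and "e \<le> 1/2"
  shows "compensating_reply e c \<in> simplex"
  using assms by (cases c) (simp_all add: simplex_iff compensating_reply_eq mixA3_def divide_simps)

lemma compensating_reply_near:
  assumes "0 \<le> e" and "e \<le> 1/2"
  shows "vnorm (\<lambda>b. compensating_reply e c b - mixA3 0 b) \<le> 2 * e"
proof (rule vnorm_le)
  define d where "d = e / (2 * (1 - e))"
  have "d \<le> e"
    using assms unfolding d_def
    by (simp add: divide_simps) (use mult_left_mono[of "2 * e" 1 e] in \<open>simp add: algebra_simps\<close>)
  then have "d\<^sup>2 \<le> e\<^sup>2"
    using assms by (intro power_mono) (simp_all add: d_def)
  have diff: "compensating_reply e c b - mixA3 0 b = (if c = A3 \<or> b = A3 then 0 else if b = c then - d else d)" for b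
    using assms by (simp add: compensating_reply_eq mixA3_def d_def divide_simps)
  have "(\<Sum>b\<in>UNIV. (compensating_reply e c b - mixA3 0 b)\<^sup>2) \<le> 2 * d\<^sup>2"
    unfolding diff sum_UNIV_act by (cases c) simp_all
  also have "\<dots> \<le> (2 * e)\<^sup>2"
    by (simp add: power_mult_distrib) (use \<open>d\<^sup>2 \<le> e\<^sup>2\<close> zero_le_power2[of e] in linarith)
  finally show "(\<Sum>b\<in>UNIV. (compensating_reply e c b - mixA3 0 b)\<^sup>2) \<le> (2 * e)\<^sup>2" .
qed (use assms in simp)

text \<open>A mutant that strictly prefers \<open>a\<^sub>3\<close> plays it; any other mutant plays a best reply, avoiding
  \<open>a\<^sub>3\<close> when the opponent population is unperturbed. This rules out two mutants that do not prefer
  \<open>a\<^sub>3\<close> sustaining each other's play of \<open>a\<^sub>3\<close>.\<close>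
lemma exists_mutant_replies:
  assumes robust: "\<forall>i e. prefers_A3 (mt i) i \<longrightarrow> 0 \<le> e \<longrightarrow> e < \<delta> \<longrightarrow>
      pure_best_reply (mt i) i A3 (mixA3 e)"
    and "0 < \<delta>" and small: "\<forall>j\<in>J. 0 \<le> \<epsilon> j \<and> \<epsilon> j < \<delta>"
  shows "\<exists>c. \<forall>i. pure_best_reply (mt i) i (c i)
      (mixA3 (if other i \<in> J \<and> c (other i) = A3 then \<epsilon> (other i) else 0))"
proof -
  define e where "e j = (if j \<in> J \<and> prefers_A3 (mt j) j then \<epsilon> j else 0)" for j
  have "\<exists>a. \<not> prefers_A3 (mt i) i \<longrightarrow>
      pure_best_reply (mt i) i a (mixA3 (e (other i))) \<and> (e (other i) = 0 \<longrightarrow> a \<noteq> A3)" for i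
    using exists_pure_best_reply exists_pure_best_reply_not_A3 by metis
  then obtain f where f: "\<And>i. \<not> prefers_A3 (mt i) i \<Longrightarrow>
      pure_best_reply (mt i) i (f i) (mixA3 (e (other i))) \<and> (e (other i) = 0 \<longrightarrow> f i \<noteq> A3)"
    by metis
  define c where "c i = (if prefers_A3 (mt i) i then A3 else f i)" for i
  have other_other: "other (other i) = i" for i
    by (cases i) simp_all
  show ?thesis
  proof (intro exI allI)
    fix i
    let ?x = "if other i \<in> J \<and> c (other i) = A3 then \<epsilon> (other i) else 0"
    show "pure_best_reply (mt i) i (c i) (mixA3 ?x)"
    proof (cases "prefers_A3 (mt i) i")
      case True
      then show ?thesis
        using robust small \<open>0 < \<delta>\<close> by (simp add: c_def)
    next
      case False
      have "?x = e (other i)"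
      proof (cases "other i \<in> J \<and> prefers_A3 (mt (other i)) (other i)")
        case True
        then show ?thesis by (simp add: c_def e_def)
      next
        case False
        moreover have "c (other i) \<noteq> A3" if "other i \<in> J" "\<not> prefers_A3 (mt (other i)) (other i)"
          using f[OF that(2)] that(2) \<open>\<not> prefers_A3 (mt i) i\<close> by (simp add: c_def e_def other_other)
        ultimately show ?thesis by (auto simp: e_def)
      qed
      then show ?thesis
        using f[OF False] False by (simp add: c_def)
    qed
  qed
qed

lemma exists_nearby_equilibrium:
  assumes entry: "valid_entry J mt \<epsilon>"
    and robust: "\<forall>i e. prefers_A3 (mt i) i \<longrightarrow> 0 \<le> e \<longrightarrow> e < \<delta> \<longrightarrow>
      pure_best_reply (mt i) i A3 (mixA3 e)"
    and "0 < \<delta>" and small: "\<forall>j\<in>J. \<epsilon> j < \<delta> \<and> \<epsilon> j \<le> 1/2 \<and> 2 * \<epsilon> j \<le> h"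
    and "0 \<le> h"
  shows "\<exists>s'. nearby (postentry mu0 J mt \<epsilon>) mu0 s0 h s'"
proof -
  have \<epsilon>: "0 < \<epsilon> j" "\<epsilon> j < 1" if "j \<in> J" for j
    using entry that by (auto simp: valid_entry_def)
  obtain c where c: "\<And>i. pure_best_reply (mt i) i (c i)
      (mixA3 (if other i \<in> J \<and> c (other i) = A3 then \<epsilon> (other i) else 0))"
    using exists_mutant_replies[OF robust \<open>0 < \<delta>\<close>] small \<epsilon> by (meson less_imp_le)
  define x where "x j = (if j \<in> J \<and> c j = A3 then \<epsilon> j else 0)" for j
  define s' where "s' i \<theta> = (if \<theta> = theta0
      then (if i \<in> J then compensating_reply (\<epsilon> i) (c i) else mixA3 0) else pure (c i))" for i \<theta>
  have x: "0 \<le> x j" "x j \<le> 1" for j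
    using \<epsilon>[of j] by (auto simp: x_def)
  have agg: "agg (postentry mu0 J mt \<epsilon>) s' j = mixA3 (x j)" for j
    using entry by (auto simp: agg_postentry[OF entry] s'_def x_def compensating_reply_agg valid_entry_def)
  have resident: "s' i theta0 \<in> simplex \<and> s' i theta0 A1 + s' i theta0 A2 = 1" for i
    using \<epsilon>[of i] small
    by (auto simp: s'_def compensating_reply_in_simplex compensating_reply_A1_A2 mixA3_in_simplex mixA3_A1_A2)
  have "is_BNE (postentry mu0 J mt \<epsilon>) s'"
    unfolding is_BNE_postentry_iff[OF entry] agg
    using resident theta0_best_reply_mixA3 x best_reply_pure c entry
    by (auto simp: s'_def x_def valid_entry_def)
  moreover have "vnorm (\<lambda>a. s' i theta0 a - s0 i theta0 a) \<le> h" for i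
    using compensating_reply_near[of "\<epsilon> i" "c i"] \<epsilon>[of i] small \<open>0 \<le> h\<close>
    by (fastforce simp: s'_def s0_eq_mixA3 vnorm_le)
  ultimately show ?thesis
    unfolding nearby_def supp_mu0 by blast
qed

lemma nearby_resident_bounds:
  assumes "nearby \<mu>' mu0 s0 h s'" and "h < 1/2"
  shows "0 < s' i theta0 A1" "0 < s' i theta0 A2" "s' i theta0 A3 \<le> h"
proof -
  have "vnorm (\<lambda>a. s' i theta0 a - mixA3 0 a) \<le> h"
    using assms(1) by (simp add: nearby_def supp_mu0 s0_eq_mixA3)
  then have "\<bar>s' i theta0 a - mixA3 0 a\<bar> \<le> h" for a
    by (rule order_trans[OF abs_le_vnorm])
  from this[of A1] this[of A2] this[of A3] assms(2)
  show "0 < s' i theta0 A1" "0 < s' i theta0 A2" "s' i theta0 A3 \<le> h"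
    by (auto simp: mixA3_def abs_le_iff)
qed

text \<open>A resident that mixes \<open>a\<^sub>1\<close> and \<open>a\<^sub>2\<close> must be indifferent between them, and
  \<open>a\<^sub>3\<close>, which earns it nothing, is then strictly worse.\<close>
lemma theta0_best_reply_balanced:
  assumes br: "best_reply theta0 i \<sigma> X" and "0 < \<sigma> A1" and "0 < \<sigma> A2"
    and X: "X \<in> simplex" "X A3 < 1"
  shows "X A1 = X A2" and "\<sigma> A3 = 0"
proof -
  have payoff: "evalp theta0 i (pure a) X =
      (if a = A1 then 2 * X A1 + X A2 else if a = A2 then X A1 + 2 * X A2 else 0)" for a
    by (cases a) (simp_all add: evalp_theta0 pure_def)
  have "pure_best_reply theta0 i A1 X" "pure_best_reply theta0 i A2 X"
    using best_reply_support[OF br] assms(2,3) by blast+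
  then have "evalp theta0 i (pure A2) X \<le> evalp theta0 i (pure A1) X"
      "evalp theta0 i (pure A1) X \<le> evalp theta0 i (pure A2) X"
    by (simp_all add: pure_best_reply_def)
  then show "X A1 = X A2"
    by (simp add: payoff)
  show "\<sigma> A3 = 0"
  proof (rule ccontr)
    assume "\<sigma> A3 \<noteq> 0"
    then have "0 < \<sigma> A3"
      using br by (simp add: best_reply_def simplex_iff)
    then have "pure_best_reply theta0 i A3 X"
      using best_reply_support[OF br] by blast
    then have "evalp theta0 i (pure A1) X \<le> evalp theta0 i (pure A3) X"
      by (simp add: pure_best_reply_def)
    then show False
      using X \<open>X A1 = X A2\<close> by (simp add: payoff simplex_iff)
  qed
qed

lemma evalp_piG_balanced:
  assumes "\<sigma> \<in> simplex" and "X \<in> simplex" and "X A1 = X A2"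
  shows "evalp (piG i) i \<sigma> X = 6 * X A1 - \<sigma> A3 * (5 * X A1 - 2)"
proof -
  have \<sigma>: "\<sigma> A1 = 1 - \<sigma> A2 - \<sigma> A3" and X: "X A3 = 1 - 2 * X A2"
    using assms by (auto simp: simplex_iff)
  show ?thesis
    unfolding evalp_piG \<sigma> X assms(3) by (simp add: algebra_simps)
qed

lemma agg_postentry_bounds:
  assumes entry: "valid_entry J mt \<epsilon>" and "\<forall>j\<in>J. \<epsilon> j \<le> 1/20" and "h \<le> 1/20"
    and resident: "s j theta0 \<in> simplex" "s j theta0 A3 \<le> h"
    and mutant: "j \<in> J \<Longrightarrow> s j (mt j) \<in> simplex"
  shows "agg (postentry mu0 J mt \<epsilon>) s j \<in> simplex \<and> agg (postentry mu0 J mt \<epsilon>) s j A3 \<le> 1/10"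
proof (cases "j \<in> J")
  case True
  have \<epsilon>: "0 < \<epsilon> j" "\<epsilon> j \<le> 1/20"
    using entry True assms(2) by (auto simp: valid_entry_def)
  have "(1 - \<epsilon> j) * s j theta0 A3 \<le> 1 * h"
    using resident \<epsilon> by (intro mult_mono) (auto simp: simplex_iff)
  moreover have "\<epsilon> j * s j (mt j) A3 \<le> \<epsilon> j * 1"
    using mutant[OF True] \<epsilon> by (intro mult_left_mono) (auto simp: simplex_iff)
  ultimately have "(1 - \<epsilon> j) * s j theta0 A3 + \<epsilon> j * s j (mt j) A3 \<le> 1/10"
    using \<epsilon> \<open>h \<le> 1/20\<close> by linarith
  moreover have "(\<lambda>a. (1 - \<epsilon> j) * s j theta0 a + \<epsilon> j * s j (mt j) a) \<in> simplex"
    using \<epsilon> resident(1) mutant[OF True] by (intro convex_comb_in_simplex) simp_all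
  ultimately show ?thesis
    using True by (simp add: agg_postentry[OF entry])
next
  case False
  then show ?thesis
    using resident \<open>h \<le> 1/20\<close> by (simp add: agg_postentry[OF entry])
qed

lemma nearby_equilibrium_resists_entry:
  assumes entry: "valid_entry J mt \<epsilon>" and small: "\<forall>j\<in>J. \<epsilon> j \<le> 1/20" and "h \<le> 1/20"
    and nb: "nearby (postentry mu0 J mt \<epsilon>) mu0 s0 h s'"
  shows "(\<exists>j\<in>J. \<forall>\<theta>\<in>supp (mu0 j).
            avg_fit piG (postentry mu0 J mt \<epsilon>) s' j \<theta> > avg_fit piG (postentry mu0 J mt \<epsilon>) s' j (mt j))
         \<or> balanced piG (postentry mu0 J mt \<epsilon>) s'"
proof -
  define \<mu>' where "\<mu>' = postentry mu0 J mt \<epsilon>"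
  define X where "X = agg \<mu>' s'"
  have resident: "best_reply theta0 i (s' i theta0) (X (other i))"
    and mutant: "i \<in> J \<Longrightarrow> best_reply (mt i) i (s' i (mt i)) (X (other i))" for i
    using nb by (auto simp: nearby_def is_BNE_postentry_iff[OF entry] X_def \<mu>'_def)
  have bounds: "0 < s' i theta0 A1" "0 < s' i theta0 A2" "s' i theta0 A3 \<le> h" for i
    using nearby_resident_bounds[OF nb] \<open>h \<le> 1/20\<close> by simp_all
  have X: "X j \<in> simplex \<and> X j A3 \<le> 1/10" for j
    using agg_postentry_bounds[OF entry small \<open>h \<le> 1/20\<close>, of s' j] resident mutant bounds
    by (auto simp: X_def \<mu>'_def best_reply_def)
  have balanced_play: "X (other i) A1 = X (other i) A2 \<and> s' i theta0 A3 = 0" for i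
    using theta0_best_reply_balanced[OF resident bounds(1,2)] X[of "other i"] by simp
  have X_balanced: "X j A1 = X j A2" for j
    using balanced_play[of "other j"] by (cases j) simp_all
  have simplex: "s' i theta0 \<in> simplex" "i \<in> J \<Longrightarrow> s' i (mt i) \<in> simplex" for i
    using resident mutant by (simp_all add: best_reply_def)
  have fitness: "avg_fit piG \<mu>' s' i \<theta> = 6 * X (other i) A1 - s' i \<theta> A3 * (5 * X (other i) A1 - 2)"
    if "s' i \<theta> \<in> simplex" for i \<theta>
    unfolding avg_fit_def X_def[symmetric] using that X X_balanced by (intro evalp_piG_balanced) auto
  have "0 < 5 * X j A1 - 2" for j
    using X[of j] X_balanced[of j] by (simp add: simplex_iff)
  have supp: "supp (\<mu>' i) = (if i \<in> J then {theta0, mt i} else {theta0})" for i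
    unfolding \<mu>'_def by (rule supp_postentry[OF entry])
  show ?thesis
  proof (cases "\<exists>j\<in>J. 0 < s' j (mt j) A3")
    case True
    then obtain j where j: "j \<in> J" "0 < s' j (mt j) A3"
      by blast
    have "avg_fit piG \<mu>' s' j (mt j) < avg_fit piG \<mu>' s' j theta0"
      unfolding fitness[OF simplex(2)[OF j(1)]] fitness[OF simplex(1)]
      using balanced_play[of j] j(2) \<open>0 < 5 * X (other j) A1 - 2\<close> by simp
    then show ?thesis
      using j unfolding \<mu>'_def supp_mu0 by auto
  next
    case False
    have "s' i \<theta> A3 = 0 \<and> s' i \<theta> \<in> simplex" if "\<theta> \<in> supp (\<mu>' i)" for i \<theta>
      using that False balanced_play simplex by (force simp: supp simplex_iff split: if_splits)
    then have "balanced piG \<mu>' s'"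
      unfolding balanced_def by (simp add: fitness)
    then show ?thesis
      unfolding \<mu>'_def by blast
  qed
qed

lemma s0_is_BNE: "is_BNE mu0 s0"
proof -
  have "agg mu0 s0 i = mixA3 0" for i
    unfolding agg_def supp_mu0 by (simp add: mu0_def s0_eq_mixA3)
  moreover have "best_reply theta0 i (mixA3 0) (mixA3 0)" for i
    by (rule theta0_best_reply_mixA3) (simp_all add: mixA3_in_simplex mixA3_A1_A2)
  ultimately show ?thesis
    by (simp add: is_BNE_iff_best_reply supp_mu0 s0_eq_mixA3)
qed

lemma mu0_s0_resists_entry:
  assumes mutants: "\<forall>j\<in>J. mt j \<notin> supp (mu0 j)" and "0 < \<eta>"
  shows "\<exists>\<eta>b \<epsilon>b. 0 \<le> \<eta>b \<and> \<eta>b < \<eta> \<and> 0 < \<epsilon>b \<and> \<epsilon>b < 1 \<and>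
    (\<forall>\<epsilon>. (\<forall>j\<in>J. 0 < \<epsilon> j \<and> \<epsilon> j < 1) \<and> Max (\<epsilon> ` J) < \<epsilon>b \<longrightarrow>
      (\<exists>s'. nearby (postentry mu0 J mt \<epsilon>) mu0 s0 \<eta>b s') \<and>
      (\<forall>s'. nearby (postentry mu0 J mt \<epsilon>) mu0 s0 \<eta>b s' \<longrightarrow>
         (\<exists>j\<in>J. \<forall>\<theta>\<in>supp (mu0 j).
             avg_fit piG (postentry mu0 J mt \<epsilon>) s' j \<theta> > avg_fit piG (postentry mu0 J mt \<epsilon>) s' j (mt j))
         \<or> balanced piG (postentry mu0 J mt \<epsilon>) s'))"
proof -
  obtain \<delta> where "0 < \<delta>" and robust: "\<forall>i e. prefers_A3 (mt i) i \<longrightarrow> 0 \<le> e \<longrightarrow> e < \<delta> \<longrightarrow>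
      pure_best_reply (mt i) i A3 (mixA3 e)"
    using prefers_A3_robust by blast
  define \<eta>b where "\<eta>b = min (\<eta> / 2) (1/20)"
  define \<epsilon>b where "\<epsilon>b = min (\<eta>b / 2) \<delta>"
  have "0 < \<eta>b" and "\<eta>b \<le> 1/20"
    using \<open>0 < \<eta>\<close> by (simp_all add: \<eta>b_def)
  show ?thesis
  proof (rule exI[of _ \<eta>b], rule exI[of _ \<epsilon>b], intro conjI allI impI)
    fix \<epsilon> :: "pl \<Rightarrow> real"
    assume \<epsilon>: "(\<forall>j\<in>J. 0 < \<epsilon> j \<and> \<epsilon> j < 1) \<and> Max (\<epsilon> ` J) < \<epsilon>b"
    then have "\<forall>j\<in>J. \<epsilon> j < \<epsilon>b"
      by (cases "J = {}") (simp_all add: Max_less_iff)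
    then have small: "\<forall>j\<in>J. \<epsilon> j < \<delta> \<and> \<epsilon> j \<le> 1/2 \<and> 2 * \<epsilon> j \<le> \<eta>b \<and> \<epsilon> j \<le> 1/20"
      by (auto simp: \<epsilon>b_def \<eta>b_def)
    have entry: "valid_entry J mt \<epsilon>"
      using mutants \<epsilon> by (auto simp: valid_entry_def supp_mu0)
    show "\<exists>s'. nearby (postentry mu0 J mt \<epsilon>) mu0 s0 \<eta>b s'"
      using exists_nearby_equilibrium[OF entry robust \<open>0 < \<delta>\<close>] small \<open>0 < \<eta>b\<close> by simp
    fix s'
    assume "nearby (postentry mu0 J mt \<epsilon>) mu0 s0 \<eta>b s'"
    then show "(\<exists>j\<in>J. \<forall>\<theta>\<in>supp (mu0 j).
             avg_fit piG (postentry mu0 J mt \<epsilon>) s' j \<theta> > avg_fit piG (postentry mu0 J mt \<epsilon>) s' j (mt j))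
         \<or> balanced piG (postentry mu0 J mt \<epsilon>) s'"
      using nearby_equilibrium_resists_entry[OF entry _ \<open>\<eta>b \<le> 1/20\<close>] small by blast
  qed (use \<open>0 < \<eta>\<close> \<open>0 < \<delta>\<close> in \<open>auto simp: \<eta>b_def \<epsilon>b_def\<close>)
qed

theorem mainTheorem13:
  shows "is_BNE mu0 s0 \<and> stable piG mu0 s0"
proof
  show "is_BNE mu0 s0"
    by (rule s0_is_BNE)
  have "balanced piG mu0 s0"
    by (simp add: balanced_def supp_mu0)
  then show "stable piG mu0 s0"
    unfolding stable_def using mu0_s0_resists_entry by blast
qed

end
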